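(* For every set $S\subseteq V$, if $R_j$ is drawn from $\Omega^n$ and $X_j(S)=\min\{1,|S\cap R_j|\}$, then $$\mathbb{B}(S)=\Phi\cdot\mathbb{E}[X_j(S)]+\sum_{v\in S}(1-\gamma(v))\,b(v)=\Gamma\cdot\mathbb{E}[Z_j(S)],$$ where $Z_j(S)=\frac{\Phi}{\Gamma}X_j(S)+\sum_{v\in S}(1-\gamma(v))\frac{b(v)}{\Gamma}$.
   Context: Let $G=(V,E)$ be a directed graph with $n=|V|$ in which each edge $(u,v)$ has probability $p(u,v)\in(0,1)$ (Independent Cascade model). A random sample graph $g$ keeps each edge $e$ independently with probability $p(e)$. Let $R(g,S)$ be the set of nodes reachable from $S$ in $g$. Each node $u$ has benefit $b(u)\ge 0$. The benefit function is $\mathbb{B}(S)=\mathbb{E}_g\big[\sum_{u\in R(g,S)}b(u)\big]$. Let $\Gamma=\sum_{u\in V}b(u)>0$. For a node $u$ with in-neighbour set $N_{in}(u)$, let $\gamma(u)=1-\prod_{v\in N_{in}(u)}(1-p(v,u))$. Let $\Phi=\sum_{u}\gamma(u)b(u)>0$. IBS distribution $\Omega^n$: pick a source node $u$ with probability $\gamma(u)b(u)/\Phi$. Then output the set of nodes that can reach $u$ in a random sample graph $g$, conditioned on the event that at least one in-edge of $u$ is present in $g$. *)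

theory Defs
  imports Complex_Main
begin

type_synonym 'a edge = "'a \<times> 'a"

definition sample_prob :: "'a edge set \<Rightarrow> ('a edge \<Rightarrow> real) \<Rightarrow> 'a edge set \<Rightarrow> real" where
  "sample_prob E p g = (\<Prod>e\<in>g. p e) * (\<Prod>e\<in>E - g. 1 - p e)"

definition prob_event :: "'a edge set \<Rightarrow> ('a edge \<Rightarrow> real) \<Rightarrow> ('a edge set \<Rightarrow> bool) \<Rightarrow> real" where
  "prob_event E p A = (\<Sum>g\<in>{g. g \<subseteq> E \<and> A g}. sample_prob E p g)"

definition cond_prob :: "'a edge set \<Rightarrow> ('a edge \<Rightarrow> real) \<Rightarrow> ('a edge set \<Rightarrow> bool) \<Rightarrow> ('a edge set \<Rightarrow> bool) \<Rightarrow> real" where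
  "cond_prob E p A C = prob_event E p (\<lambda>g. A g \<and> C g) / prob_event E p C"

definition reachable_set :: "'a edge set \<Rightarrow> 'a set \<Rightarrow> 'a set" where
  "reachable_set g S = {v. \<exists>s\<in>S. (s, v) \<in> g\<^sup>*}"

definition reaching_set :: "'a edge set \<Rightarrow> 'a \<Rightarrow> 'a set" where
  "reaching_set g u = {v. (v, u) \<in> g\<^sup>*}"

definition in_nbrs :: "'a edge set \<Rightarrow> 'a \<Rightarrow> 'a set" where
  "in_nbrs E u = {v. (v, u) \<in> E}"

definition has_in_edge :: "'a edge set \<Rightarrow> 'a \<Rightarrow> bool" where
  "has_in_edge g u = (\<exists>v. (v, u) \<in> g)"

definition gamma :: "'a edge set \<Rightarrow> ('a edge \<Rightarrow> real) \<Rightarrow> 'a \<Rightarrow> real" where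
  "gamma E p u = 1 - (\<Prod>v\<in>in_nbrs E u. 1 - p (v, u))"

definition benefit :: "'a edge set \<Rightarrow> ('a edge \<Rightarrow> real) \<Rightarrow> ('a \<Rightarrow> real) \<Rightarrow> 'a set \<Rightarrow> real" where
  "benefit E p b S = (\<Sum>g\<in>Pow E. sample_prob E p g * (\<Sum>u\<in>reachable_set g S. b u))"

definition Gamma :: "'a set \<Rightarrow> ('a \<Rightarrow> real) \<Rightarrow> real" where
  "Gamma V b = (\<Sum>u\<in>V. b u)"

definition Phi :: "'a set \<Rightarrow> 'a edge set \<Rightarrow> ('a edge \<Rightarrow> real) \<Rightarrow> ('a \<Rightarrow> real) \<Rightarrow> real" where
  "Phi V E p b = (\<Sum>u\<in>V. gamma E p u * b u)"

text \<open>IBS distribution Omega^n: probability that the output set equals R.\<close>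
definition ibs_prob :: "'a set \<Rightarrow> 'a edge set \<Rightarrow> ('a edge \<Rightarrow> real) \<Rightarrow> ('a \<Rightarrow> real) \<Rightarrow> 'a set \<Rightarrow> real" where
  "ibs_prob V E p b R = (\<Sum>u\<in>V. (gamma E p u * b u / Phi V E p b) *
      cond_prob E p (\<lambda>g. reaching_set g u = R) (\<lambda>g. has_in_edge g u))"

text \<open>Expectation of f(R) for R drawn from Omega^n (all outputs are subsets of V).\<close>
definition ibs_expect :: "'a set \<Rightarrow> 'a edge set \<Rightarrow> ('a edge \<Rightarrow> real) \<Rightarrow> ('a \<Rightarrow> real) \<Rightarrow> ('a set \<Rightarrow> real) \<Rightarrow> real" where
  "ibs_expect V E p b f = (\<Sum>R\<in>Pow V. ibs_prob V E p b R * f R)"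

definition X_var :: "'a set \<Rightarrow> 'a set \<Rightarrow> real" where
  "X_var S R = real (min 1 (card (S \<inter> R)))"

definition Z_var :: "'a set \<Rightarrow> 'a edge set \<Rightarrow> ('a edge \<Rightarrow> real) \<Rightarrow> ('a \<Rightarrow> real) \<Rightarrow> 'a set \<Rightarrow> 'a set \<Rightarrow> real" where
  "Z_var V E p b S R = Phi V E p b / Gamma V b * X_var S R
     + (\<Sum>v\<in>S. (1 - gamma E p v) * b v / Gamma V b)"

end

theory Submission
  imports Defs
begin

text \<open>Write \<open>\<BB>(S) = \<Sum>\<^sub>u b(u) Pr[u \<in> R(g,S)]\<close>. A node outside \<open>S\<close> is reached exactly
  when one of its in-edges is live and \<open>S\<close> meets the set of nodes reaching it; a node of \<open>S\<close>
  is reached surely, and that same event has probability \<open>\<gamma>(u)\<close> for it, leaving the remainder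
  \<open>1 - \<gamma>(u)\<close>. The IBS sampler draws \<open>u\<close> with weight \<open>\<gamma>(u) b(u)\<close> and conditions on precisely
  the in-edge event, whose probability is \<open>\<gamma>(u)\<close>; so the weight cancels the conditioning and
  \<open>\<Phi> E[X(S)] = \<Sum>\<^sub>u b(u) Pr[u has a live in-edge and S meets the nodes reaching u]\<close>.
  The second equality is linearity of expectation.\<close>

lemma sum_sample_prob_Pow:
  assumes "finite E"
  shows "(\<Sum>g\<in>Pow E. sample_prob E p g) = 1"
  using prod_add[OF assms, of p "\<lambda>e. 1 - p e"] by (simp add: sample_prob_def)

lemma prob_event_eq_sum_of_bool:
  assumes "finite E"
  shows "prob_event E p A = (\<Sum>g\<in>Pow E. sample_prob E p g * of_bool (A g))"
proof -
  have "{g. g \<subseteq> E \<and> A g} = Pow E \<inter> {g. A g}" by auto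
  with assms show ?thesis by (simp add: prob_event_def)
qed

lemma prob_event_cong:
  assumes "\<And>g. g \<subseteq> E \<Longrightarrow> A g \<longleftrightarrow> B g"
  shows "prob_event E p A = prob_event E p B"
  unfolding prob_event_def using assms by (metis (lifting))

lemma prob_event_impossible:
  assumes "\<And>g. g \<subseteq> E \<Longrightarrow> \<not> A g"
  shows "prob_event E p A = 0"
proof -
  have "{g. g \<subseteq> E \<and> A g} = {}" using assms by blast
  then show ?thesis by (simp only: prob_event_def sum.empty)
qed

lemma prob_event_certain:
  assumes "finite E" and "\<And>g. g \<subseteq> E \<Longrightarrow> A g"
  shows "prob_event E p A = 1"
  using prob_event_cong[of E A "\<lambda>_. True" p] assms sum_sample_prob_Pow[OF assms(1)]
  by (simp add: prob_event_eq_sum_of_bool[OF assms(1)])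

lemma sample_prob_nonneg:
  assumes "\<forall>e\<in>E. 0 \<le> p e \<and> p e \<le> 1" and "g \<subseteq> E"
  shows "0 \<le> sample_prob E p g"
  unfolding sample_prob_def using assms by (auto intro!: mult_nonneg_nonneg prod_nonneg)

lemma prob_event_nonneg:
  assumes "\<forall>e\<in>E. 0 \<le> p e \<and> p e \<le> 1"
  shows "0 \<le> prob_event E p A"
  unfolding prob_event_def by (rule sum_nonneg) (use sample_prob_nonneg[OF assms] in auto)

lemma prob_event_mono:
  assumes "finite E" and "\<forall>e\<in>E. 0 \<le> p e \<and> p e \<le> 1"
    and "\<And>g. g \<subseteq> E \<Longrightarrow> A g \<Longrightarrow> B g"
  shows "prob_event E p A \<le> prob_event E p B"
  unfolding prob_event_def
  by (rule sum_mono2) (use assms sample_prob_nonneg[OF assms(2)] in auto)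

lemma prob_event_compl:
  assumes "finite E"
  shows "prob_event E p (\<lambda>g. \<not> A g) = 1 - prob_event E p A"
proof -
  have "prob_event E p A + prob_event E p (\<lambda>g. \<not> A g) = (\<Sum>g\<in>Pow E. sample_prob E p g)"
    unfolding prob_event_eq_sum_of_bool[OF assms] sum.distrib[symmetric] by (rule sum.cong) auto
  then show ?thesis using sum_sample_prob_Pow[OF assms] by simp
qed

lemma prob_event_avoid:
  assumes "finite E" and "A \<subseteq> E"
  shows "prob_event E p (\<lambda>g. g \<inter> A = {}) = (\<Prod>e\<in>A. 1 - p e)"
proof -
  have "finite A" using assms finite_subset by blast
  have "sample_prob E p g = sample_prob (E - A) p g * (\<Prod>e\<in>A. 1 - p e)"
    if "g \<subseteq> E - A" for g
  proof -
    have "E - g = (E - A - g) \<union> A" using that assms(2) by auto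
    then have "(\<Prod>e\<in>E - g. 1 - p e) = (\<Prod>e\<in>E - A - g. 1 - p e) * (\<Prod>e\<in>A. 1 - p e)"
      using prod.union_disjoint[of "E - A - g" A] assms(1) \<open>finite A\<close> by auto
    then show ?thesis by (simp add: sample_prob_def)
  qed
  then have "prob_event E p (\<lambda>g. g \<inter> A = {}) = (\<Sum>g\<in>Pow (E - A). sample_prob (E - A) p g) * (\<Prod>e\<in>A. 1 - p e)"
    unfolding prob_event_def sum_distrib_right by (intro sum.cong) auto
  then show ?thesis using sum_sample_prob_Pow[of "E - A" p] assms(1) by simp
qed

lemma prob_event_has_in_edge:
  assumes "finite E"
  shows "prob_event E p (\<lambda>g. has_in_edge g u) = gamma E p u"
proof -
  let ?A = "(\<lambda>v. (v, u)) ` in_nbrs E u"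
  have "prob_event E p (\<lambda>g. \<not> has_in_edge g u) = prob_event E p (\<lambda>g. g \<inter> ?A = {})"
    by (rule prob_event_cong) (auto simp: has_in_edge_def in_nbrs_def)
  also have "\<dots> = (\<Prod>e\<in>?A. 1 - p e)"
    by (rule prob_event_avoid) (use assms in \<open>auto simp: in_nbrs_def\<close>)
  also have "\<dots> = (\<Prod>v\<in>in_nbrs E u. 1 - p (v, u))"
    by (subst prod.reindex) (auto simp: inj_on_def)
  finally show ?thesis
    using prob_event_compl[OF assms, of p "\<lambda>g. has_in_edge g u"] by (simp add: gamma_def)
qed

lemma sum_prob_event_partition:
  assumes "finite E" and "finite V" and "\<And>g. g \<subseteq> E \<Longrightarrow> f g \<in> Pow V"
  shows "(\<Sum>R\<in>Pow V. prob_event E p (\<lambda>g. f g = R \<and> Q g)) = prob_event E p Q"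
proof -
  have "prob_event E p (\<lambda>g. f g = R \<and> Q g)
      = (\<Sum>g\<in>Pow E. if f g = R then sample_prob E p g * of_bool (Q g) else 0)" for R
    unfolding prob_event_eq_sum_of_bool[OF assms(1)] by (intro sum.cong) auto
  then have "(\<Sum>R\<in>Pow V. prob_event E p (\<lambda>g. f g = R \<and> Q g))
      = (\<Sum>g\<in>Pow E. \<Sum>R\<in>Pow V. if f g = R then sample_prob E p g * of_bool (Q g) else 0)"
    by (simp add: sum.swap[of _ "Pow V"])
  also have "\<dots> = (\<Sum>g\<in>Pow E. sample_prob E p g * of_bool (Q g))"
    using assms(2,3) by (intro sum.cong) (auto simp: sum.delta')
  finally show ?thesis by (simp add: prob_event_eq_sum_of_bool[OF assms(1)])
qed

lemma prob_event_mult_of_bool: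
  "prob_event E p (\<lambda>g. f g = R \<and> Q g) * of_bool (C R) = prob_event E p (\<lambda>g. f g = R \<and> Q g \<and> C (f g))"
proof (cases "C R")
  case True
  then show ?thesis by (auto intro: prob_event_cong)
next
  case False
  then have "prob_event E p (\<lambda>g. f g = R \<and> Q g \<and> C (f g)) = 0"
    by (intro prob_event_impossible) auto
  with False show ?thesis by simp
qed

text \<open>No positivity of \<open>prob_event E p C\<close> is needed: when it vanishes, \<open>cond_prob\<close> is the
  junk value \<open>0\<close> and so are all the joint probabilities on the right.\<close>

lemma prob_event_mult_sum_cond_prob:
  assumes "finite E" and "\<forall>e\<in>E. 0 \<le> p e \<and> p e \<le> 1"
  shows "prob_event E p C * (\<Sum>R\<in>A. cond_prob E p (\<lambda>g. F g = R) C * h R)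
       = (\<Sum>R\<in>A. prob_event E p (\<lambda>g. F g = R \<and> C g) * h R)"
proof (cases "prob_event E p C = 0")
  case True
  have "prob_event E p (\<lambda>g. F g = R \<and> C g) = 0" for R
  proof (rule order_antisym)
    have "prob_event E p (\<lambda>g. F g = R \<and> C g) \<le> prob_event E p C"
      by (rule prob_event_mono) (use assms in auto)
    with True show "prob_event E p (\<lambda>g. F g = R \<and> C g) \<le> 0" by simp
  qed (rule prob_event_nonneg[OF assms(2)])
  with True show ?thesis by simp
next
  case False
  then show ?thesis by (simp add: sum_distrib_left cond_prob_def)
qed

lemma rtrancl_endpoints_in_field:
  assumes "(s, v) \<in> g\<^sup>*" and "g \<subseteq> V \<times> V"
  shows "s = v \<or> s \<in> V \<and> v \<in> V"
  using assms by (induction rule: rtrancl_induct) auto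

lemma reachable_set_subset:
  "g \<subseteq> V \<times> V \<Longrightarrow> S \<subseteq> V \<Longrightarrow> reachable_set g S \<subseteq> V"
  unfolding reachable_set_def by (auto dest: rtrancl_endpoints_in_field)

lemma reaching_set_subset:
  "g \<subseteq> V \<times> V \<Longrightarrow> u \<in> V \<Longrightarrow> reaching_set g u \<subseteq> V"
  unfolding reaching_set_def by (auto dest: rtrancl_endpoints_in_field)

lemma reachable_set_iff_reaching_set:
  assumes "u \<notin> S"
  shows "u \<in> reachable_set g S \<longleftrightarrow> has_in_edge g u \<and> S \<inter> reaching_set g u \<noteq> {}"
proof
  assume "u \<in> reachable_set g S"
  then obtain s where "s \<in> S" and su: "(s, u) \<in> g\<^sup>*"
    unfolding reachable_set_def by blast
  moreover from \<open>s \<in> S\<close> assms have "s \<noteq> u" by blast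
  with su obtain y where "(y, u) \<in> g" by (metis rtranclE)
  ultimately show "has_in_edge g u \<and> S \<inter> reaching_set g u \<noteq> {}"
    unfolding has_in_edge_def reaching_set_def by blast
next
  assume "has_in_edge g u \<and> S \<inter> reaching_set g u \<noteq> {}"
  then show "u \<in> reachable_set g S"
    unfolding reaching_set_def reachable_set_def by blast
qed

lemma X_var_eq_of_bool: "finite S \<Longrightarrow> X_var S R = of_bool (S \<inter> R \<noteq> {})"
  unfolding X_var_def by (auto simp: card_gt_0_iff Suc_le_eq min_def)

lemma benefit_eq_sum_prob_reachable:
  assumes "finite E" and "finite V" and "\<And>g. g \<subseteq> E \<Longrightarrow> reachable_set g S \<subseteq> V"
  shows "benefit E p b S = (\<Sum>u\<in>V. b u * prob_event E p (\<lambda>g. u \<in> reachable_set g S))"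
proof -
  have "(\<Sum>u\<in>reachable_set g S. b u) = (\<Sum>u\<in>V. b u * of_bool (u \<in> reachable_set g S))"
    if "g \<subseteq> E" for g
    using assms(2) assms(3)[OF that] by (simp add: Int_absorb1)
  then have "benefit E p b S
      = (\<Sum>g\<in>Pow E. sample_prob E p g * (\<Sum>u\<in>V. b u * of_bool (u \<in> reachable_set g S)))"
    unfolding benefit_def by (intro sum.cong) auto
  also have "\<dots> = (\<Sum>u\<in>V. b u * prob_event E p (\<lambda>g. u \<in> reachable_set g S))"
    unfolding prob_event_eq_sum_of_bool[OF assms(1)] sum_distrib_left
    by (subst sum.swap) (simp add: mult.left_commute)
  finally show ?thesis .
qed

lemma prob_event_reachable:
  assumes "finite E"
  shows "prob_event E p (\<lambda>g. u \<in> reachable_set g S)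
       = prob_event E p (\<lambda>g. has_in_edge g u \<and> S \<inter> reaching_set g u \<noteq> {})
         + of_bool (u \<in> S) * (1 - gamma E p u)"
proof (cases "u \<in> S")
  case True
  have "prob_event E p (\<lambda>g. u \<in> reachable_set g S) = 1"
    by (rule prob_event_certain[OF assms]) (use True in \<open>auto simp: reachable_set_def\<close>)
  moreover have "prob_event E p (\<lambda>g. has_in_edge g u \<and> S \<inter> reaching_set g u \<noteq> {})
      = prob_event E p (\<lambda>g. has_in_edge g u)"
    by (rule prob_event_cong) (use True in \<open>auto simp: reaching_set_def\<close>)
  ultimately show ?thesis using True prob_event_has_in_edge[OF assms] by simp
next
  case False
  then show ?thesis by (simp add: reachable_set_iff_reaching_set)
qed

lemma benefit_eq_sum_prob_in_edge:
  assumes "finite V" and "E \<subseteq> V \<times> V" and "S \<subseteq> V"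
  shows "benefit E p b S
       = (\<Sum>u\<in>V. b u * prob_event E p (\<lambda>g. has_in_edge g u \<and> S \<inter> reaching_set g u \<noteq> {}))
         + (\<Sum>v\<in>S. (1 - gamma E p v) * b v)"
proof -
  have "finite E" using assms(1,2) finite_subset by blast
  have "benefit E p b S = (\<Sum>u\<in>V. b u * prob_event E p (\<lambda>g. u \<in> reachable_set g S))"
    by (rule benefit_eq_sum_prob_reachable[OF \<open>finite E\<close> assms(1)])
      (use reachable_set_subset[OF _ assms(3)] assms(2) in blast)
  also have "\<dots> = (\<Sum>u\<in>V. b u * prob_event E p (\<lambda>g. has_in_edge g u \<and> S \<inter> reaching_set g u \<noteq> {}))
      + (\<Sum>u\<in>V. of_bool (u \<in> S) * ((1 - gamma E p u) * b u))"
    unfolding sum.distrib[symmetric] prob_event_reachable[OF \<open>finite E\<close>]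
    by (intro sum.cong) (simp_all add: algebra_simps)
  finally show ?thesis using assms(1,3) by (simp add: Int_absorb1)
qed

lemma Phi_mult_ibs_expect:
  assumes "finite E" and "\<forall>e\<in>E. 0 \<le> p e \<and> p e \<le> 1" and "Phi V E p b \<noteq> 0"
  shows "Phi V E p b * ibs_expect V E p b f
       = (\<Sum>u\<in>V. b u * (\<Sum>R\<in>Pow V.
            prob_event E p (\<lambda>g. reaching_set g u = R \<and> has_in_edge g u) * f R))"
proof -
  let ?cond = "\<lambda>u R. cond_prob E p (\<lambda>g. reaching_set g u = R) (\<lambda>g. has_in_edge g u)"
  have "ibs_expect V E p b f
      = (\<Sum>u\<in>V. b u / Phi V E p b * (gamma E p u * (\<Sum>R\<in>Pow V. ?cond u R * f R)))"
    unfolding ibs_expect_def ibs_prob_def sum_distrib_right sum_distrib_left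
    by (subst sum.swap) (auto intro!: sum.cong)
  also have "\<dots> = (\<Sum>u\<in>V. b u / Phi V E p b * (\<Sum>R\<in>Pow V.
            prob_event E p (\<lambda>g. reaching_set g u = R \<and> has_in_edge g u) * f R))"
    by (simp add: prob_event_has_in_edge[OF assms(1), symmetric]
        prob_event_mult_sum_cond_prob[OF assms(1,2)])
  finally show ?thesis using assms(3) by (simp add: sum_distrib_left)
qed

lemma sum_ibs_prob:
  assumes "finite V" and "E \<subseteq> V \<times> V" and "\<forall>e\<in>E. 0 \<le> p e \<and> p e \<le> 1"
    and "Phi V E p b \<noteq> 0"
  shows "(\<Sum>R\<in>Pow V. ibs_prob V E p b R) = 1"
proof -
  have "finite E" using assms(1,2) finite_subset by blast
  have "(\<Sum>R\<in>Pow V. prob_event E p (\<lambda>g. reaching_set g u = R \<and> has_in_edge g u) * 1)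
      = gamma E p u" if "u \<in> V" for u
    using sum_prob_event_partition[OF \<open>finite E\<close> assms(1)] reaching_set_subset[of _ V u]
      prob_event_has_in_edge[OF \<open>finite E\<close>] assms(2) that
    by (simp add: subset_trans)
  then have "Phi V E p b * ibs_expect V E p b (\<lambda>_. 1) = Phi V E p b"
    unfolding Phi_mult_ibs_expect[OF \<open>finite E\<close> assms(3,4)]
    by (simp add: Phi_def mult.commute)
  with assms(4) show ?thesis by (simp add: ibs_expect_def)
qed

lemma Phi_mult_ibs_expect_X_var:
  assumes "finite V" and "E \<subseteq> V \<times> V" and "\<forall>e\<in>E. 0 \<le> p e \<and> p e \<le> 1"
    and "Phi V E p b \<noteq> 0" and "finite S"
  shows "Phi V E p b * ibs_expect V E p b (X_var S)
       = (\<Sum>u\<in>V. b u * prob_event E p (\<lambda>g. has_in_edge g u \<and> S \<inter> reaching_set g u \<noteq> {}))"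
proof -
  have "finite E" using assms(1,2) finite_subset by blast
  have "(\<Sum>R\<in>Pow V. prob_event E p (\<lambda>g. reaching_set g u = R \<and> has_in_edge g u) * X_var S R)
      = prob_event E p (\<lambda>g. has_in_edge g u \<and> S \<inter> reaching_set g u \<noteq> {})" if "u \<in> V" for u
  proof -
    have "(\<Sum>R\<in>Pow V. prob_event E p (\<lambda>g. reaching_set g u = R \<and> has_in_edge g u) * X_var S R)
        = (\<Sum>R\<in>Pow V. prob_event E p (\<lambda>g. reaching_set g u = R
             \<and> has_in_edge g u \<and> S \<inter> reaching_set g u \<noteq> {}))"
      by (simp add: X_var_eq_of_bool[OF assms(5)]
          prob_event_mult_of_bool[where f="\<lambda>g. reaching_set g u" and C="\<lambda>R. S \<inter> R \<noteq> {}"])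
    also have "\<dots> = prob_event E p (\<lambda>g. has_in_edge g u \<and> S \<inter> reaching_set g u \<noteq> {})"
      by (rule sum_prob_event_partition[OF \<open>finite E\<close> assms(1)])
        (use reaching_set_subset[of _ V u] assms(2) that in blast)
    finally show ?thesis .
  qed
  then show ?thesis by (simp add: Phi_mult_ibs_expect[OF \<open>finite E\<close> assms(3,4)])
qed

lemma ibs_expect_affine:
  assumes "(\<Sum>R\<in>Pow V. ibs_prob V E p b R) = 1"
  shows "ibs_expect V E p b (\<lambda>R. a * f R + c) = a * ibs_expect V E p b f + c"
proof -
  have "ibs_expect V E p b (\<lambda>R. a * f R + c)
      = a * ibs_expect V E p b f + c * (\<Sum>R\<in>Pow V. ibs_prob V E p b R)"
    unfolding ibs_expect_def by (simp add: algebra_simps sum.distrib sum_distrib_left)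
  with assms show ?thesis by simp
qed

theorem lemma3:
  fixes V :: "'a set" and E :: "('a \<times> 'a) set" and p :: "'a \<times> 'a \<Rightarrow> real"
    and b :: "'a \<Rightarrow> real" and S :: "'a set"
  assumes "finite V" and "E \<subseteq> V \<times> V"
    and "\<And>e. e \<in> E \<Longrightarrow> 0 < p e \<and> p e < 1"
    and "\<And>u. u \<in> V \<Longrightarrow> b u \<ge> 0"
    and "Gamma V b > 0" and "Phi V E p b > 0"
    and "S \<subseteq> V"
  shows "benefit E p b S = Phi V E p b * ibs_expect V E p b (X_var S)
           + (\<Sum>v\<in>S. (1 - gamma E p v) * b v)
       \<and> Phi V E p b * ibs_expect V E p b (X_var S) + (\<Sum>v\<in>S. (1 - gamma E p v) * b v)
           = Gamma V b * ibs_expect V E p b (Z_var V E p b S)"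
proof
  have p: "\<forall>e\<in>E. 0 \<le> p e \<and> p e \<le> 1" using assms(3) by (simp add: less_imp_le)
  have Phi: "Phi V E p b \<noteq> 0" using assms(6) by simp
  have "finite S" using assms(1,7) finite_subset by blast
  show "benefit E p b S = Phi V E p b * ibs_expect V E p b (X_var S)
      + (\<Sum>v\<in>S. (1 - gamma E p v) * b v)"
    by (simp add: benefit_eq_sum_prob_in_edge[OF assms(1,2,7)]
        Phi_mult_ibs_expect_X_var[OF assms(1,2) p Phi \<open>finite S\<close>])
  have Z_var: "Z_var V E p b S = (\<lambda>R. Phi V E p b / Gamma V b * X_var S R
      + (\<Sum>v\<in>S. (1 - gamma E p v) * b v) / Gamma V b)"
    by (simp add: Z_var_def fun_eq_iff sum_divide_distrib)
  have "ibs_expect V E p b (Z_var V E p b S) = Phi V E p b / Gamma V b * ibs_expect V E p b (X_var S)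
      + (\<Sum>v\<in>S. (1 - gamma E p v) * b v) / Gamma V b"
    unfolding Z_var by (rule ibs_expect_affine[OF sum_ibs_prob[OF assms(1,2) p Phi]])
  then show "Phi V E p b * ibs_expect V E p b (X_var S) + (\<Sum>v\<in>S. (1 - gamma E p v) * b v)
      = Gamma V b * ibs_expect V E p b (Z_var V E p b S)"
    using assms(5) by (simp add: distrib_left)
qed

end
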